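(* Let $G$ be a group, $n\ge2$, $X=\{x_1,\dots,x_n\}$, fix a function $X\to G$, and let $(\mathcal X_l)_{l\ge1}$ be a non-backtracking random walk on $(G,X)$ which is irreducible as a Markov chain on $\Omega$. Then $(\mathcal X_l)$ has period $2$ if and only if there exists a subgroup $H\le G$ of index $2$ such that $x_i\notin H$ for all $i=1,\dots,n$.
   Context: Let $G$ be a group, $X=\{x_1,\dots,x_n\}$ a set with $n\ge 2$, and fix a function $X\to G$; we identify each $x_i$ with its image in $G$. Let $\Omega=G\times\{\pm1,\pm2,\dots,\pm n\}$, with elements written $(g,\epsilon i)$, $g\in G$, $\epsilon=\pm1$, $i\in\{1,\dots,n\}$. A non-backtracking random walk on $(G,X)$ is a Markov chain $(\mathcal X_l)_{l\ge1}$ on $\Omega$ with transition probabilities $\mathbb P(\mathcal X_{l+1}=(g,\epsilon i)\mid \mathcal X_l=(h,\epsilon' j))=\alpha_{\epsilon' j,\epsilon i}$ if $g=hx_i^{\epsilon}$ and $\epsilon i\neq -\epsilon' j$, and $=0$ otherwise, where the $\alpha_{\epsilon' j,\epsilon i}$ are positive constants with $\sum_{\epsilon i\neq-\epsilon' j}\alpha_{\epsilon' j,\epsilon i}=1$ for each $\epsilon' j$; and with initial distribution $\mathbb P(\mathcal X_1=(g,\epsilon i))=\beta_{\epsilon i}$ if $g=x_i^{\epsilon}$ and $0$ otherwise, for positive constants $\beta_{\epsilon i}$ summing to $1$. Irreducibility and period refer to the Markov chain on the full state space $\Omega$. *)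

theory Defs
  imports Complex_Main "HOL-Algebra.Coset"
begin

text \<open>Signed directions: the set of labels \<open>\<epsilon> i\<close>, \<open>\<epsilon> = \<plusminus>1\<close>, \<open>1 \<le> i \<le> n\<close>,
  encoded as nonzero integers in \<open>{-n..n}\<close>.\<close>
definition dirs :: "nat \<Rightarrow> int set" where
  "dirs n = {s. s \<noteq> 0 \<and> - int n \<le> s \<and> s \<le> int n}"

definition Omega :: "('a, 'b) monoid_scheme \<Rightarrow> nat \<Rightarrow> ('a \<times> int) set" where
  "Omega G n = carrier G \<times> dirs n"

definition gen_pow :: "('a, 'b) monoid_scheme \<Rightarrow> (nat \<Rightarrow> 'a) \<Rightarrow> int \<Rightarrow> 'a" where
  "gen_pow G x s = (if 0 < s then x (nat s) else inv\<^bsub>G\<^esub> (x (nat (- s))))"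

definition nbrw_P :: "('a, 'b) monoid_scheme \<Rightarrow> nat \<Rightarrow> (nat \<Rightarrow> 'a) \<Rightarrow> (int \<Rightarrow> int \<Rightarrow> real)
    \<Rightarrow> 'a \<times> int \<Rightarrow> 'a \<times> int \<Rightarrow> real" where
  "nbrw_P G n x alpha a b =
     (if a \<in> Omega G n \<and> b \<in> Omega G n \<and> snd b \<noteq> - snd a
         \<and> fst b = fst a \<otimes>\<^bsub>G\<^esub> gen_pow G x (snd b)
      then alpha (snd a) (snd b) else 0)"

text \<open>Since from a state \<open>(h, s)\<close>
  only the states \<open>(h x_t^{\<epsilon>}, t)\<close> can be reached in one step, the sum defining the
  matrix product is the finite sum over the labels \<open>t\<close>.\<close>
fun nbrw_Pm :: "('a, 'b) monoid_scheme \<Rightarrow> nat \<Rightarrow> (nat \<Rightarrow> 'a) \<Rightarrow> (int \<Rightarrow> int \<Rightarrow> real)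
    \<Rightarrow> nat \<Rightarrow> 'a \<times> int \<Rightarrow> 'a \<times> int \<Rightarrow> real" where
  "nbrw_Pm G n x alpha 0 a b = (if a = b then 1 else 0)"
| "nbrw_Pm G n x alpha (Suc m) a b =
     (\<Sum>t\<in>dirs n. nbrw_P G n x alpha a (fst a \<otimes>\<^bsub>G\<^esub> gen_pow G x t, t)
                  * nbrw_Pm G n x alpha m (fst a \<otimes>\<^bsub>G\<^esub> gen_pow G x t, t) b)"

definition nbrw_irreducible :: "('a, 'b) monoid_scheme \<Rightarrow> nat \<Rightarrow> (nat \<Rightarrow> 'a)
    \<Rightarrow> (int \<Rightarrow> int \<Rightarrow> real) \<Rightarrow> bool" where
  "nbrw_irreducible G n x alpha \<longleftrightarrow>
     (\<forall>a\<in>Omega G n. \<forall>b\<in>Omega G n. \<exists>m. 0 < nbrw_Pm G n x alpha m a b)"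

definition state_period :: "('a, 'b) monoid_scheme \<Rightarrow> nat \<Rightarrow> (nat \<Rightarrow> 'a)
    \<Rightarrow> (int \<Rightarrow> int \<Rightarrow> real) \<Rightarrow> 'a \<times> int \<Rightarrow> nat" where
  "state_period G n x alpha a = Gcd {m. 1 \<le> m \<and> 0 < nbrw_Pm G n x alpha m a a}"

definition nbrw_has_period :: "('a, 'b) monoid_scheme \<Rightarrow> nat \<Rightarrow> (nat \<Rightarrow> 'a)
    \<Rightarrow> (int \<Rightarrow> int \<Rightarrow> real) \<Rightarrow> nat \<Rightarrow> bool" where
  "nbrw_has_period G n x alpha d \<longleftrightarrow> (\<forall>a\<in>Omega G n. state_period G n x alpha a = d)"

definition nbrw_params :: "nat \<Rightarrow> (int \<Rightarrow> int \<Rightarrow> real) \<Rightarrow> (int \<Rightarrow> real) \<Rightarrow> bool" where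
  "nbrw_params n alpha beta \<longleftrightarrow>
     (\<forall>s\<in>dirs n. \<forall>t\<in>dirs n. t \<noteq> - s \<longrightarrow> 0 < alpha s t)
   \<and> (\<forall>s\<in>dirs n. (\<Sum>t\<in>dirs n - {- s}. alpha s t) = 1)
   \<and> (\<forall>s\<in>dirs n. 0 < beta s) \<and> (\<Sum>s\<in>dirs n. beta s) = 1"

end

theory Submission
  imports Defs
begin

text \<open>
  Call \<open>f : G \<rightarrow> \<int>\<close> a potential modulo \<open>d\<close> if \<open>f (h x\<^sub>t\<^sup>\<epsilon>) \<equiv> f h + 1 (mod d)\<close> for all \<open>h\<close> and all
  labels. Along a path of positive probability the potential grows by the length of the path, so a
  potential modulo \<open>d\<close> forces \<open>d\<close> to divide every return time. Conversely, if \<open>d\<close> divides all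
  return times at one state, then by irreducibility the length of any path from that state is
  well defined modulo \<open>d\<close>; since \<open>n \<ge> 2\<close>, any two states \<open>(h, s)\<close>, \<open>(h, s')\<close> have a common
  successor, so this length depends on \<open>h\<close> only and is a potential. Hence \<open>d\<close> divides the period
  iff a potential modulo \<open>d\<close> exists. Stepping along \<open>x\<^sub>1\<close> and back along \<open>x\<^sub>1\<^sup>-\<^sup>1\<close> shows \<open>d | 2\<close>, and
  a potential modulo 2 is, up to a constant, a homomorphism onto \<open>\<int>/2\<close> that is odd on every
  generator: its kernel is the required subgroup of index 2, and conversely the indicator of the
  complement of such a subgroup is a potential modulo 2.
\<close>

lemma (in group) rcos_eq_iff:
  assumes "subgroup H G" "a \<in> carrier G" "b \<in> carrier G"
  shows "H #> a = H #> b \<longleftrightarrow> a \<otimes> inv b \<in> H"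
proof
  assume "H #> a = H #> b"
  then have "a \<in> H #> b" using rcos_self[OF assms(2,1)] by simp
  then show "a \<otimes> inv b \<in> H" using subgroup.rcos_module[OF assms(1) is_group assms(3,2)] by simp
next
  assume "a \<otimes> inv b \<in> H"
  then have "a \<in> H #> b" using subgroup.rcos_module[OF assms(1) is_group assms(3,2)] by simp
  then show "H #> a = H #> b" using repr_independence[OF _ assms(3,1)] by simp
qed

lemma (in group) card_rcosets_eq_2_iff:
  assumes H: "subgroup H G"
  shows "card (rcosets H) = 2 \<longleftrightarrow>
    H \<noteq> carrier G \<and> (\<forall>a\<in>carrier G - H. \<forall>b\<in>carrier G - H. a \<otimes> inv b \<in> H)"
proof -
  have H_sub: "H \<subseteq> carrier G" using H by (rule subgroup.subset)
  have rcos_eq_H: "H #> a = H \<longleftrightarrow> a \<in> H" if "a \<in> carrier G" for a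
    using rcos_eq_iff[OF H that one_closed] H_sub that by simp
  have H_rcos: "H \<in> rcosets H" using rcosetsI[OF H_sub one_closed] H_sub by simp
  show ?thesis
  proof
    assume card: "card (rcosets H) = 2"
    then have fin: "finite (rcosets H)" by (intro card_ge_0_finite) simp
    have "H \<noteq> carrier G"
    proof
      assume "H = carrier G"
      then have "rcosets H = {H}" using rcos_eq_H H_rcos by (auto simp: RCOSETS_def)
      with card show False by simp
    qed
    moreover have "a \<otimes> inv b \<in> H" if a: "a \<in> carrier G - H" and b: "b \<in> carrier G - H" for a b
    proof -
      have "H #> a = H #> b"
      proof (rule ccontr)
        assume "H #> a \<noteq> H #> b"
        moreover have "H #> a \<noteq> H" "H #> b \<noteq> H" using a b rcos_eq_H by auto
        ultimately have "card {H, H #> a, H #> b} = 3" by auto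
        moreover have "{H, H #> a, H #> b} \<subseteq> rcosets H" using H_rcos a b rcosetsI[OF H_sub] by auto
        ultimately have "3 \<le> card (rcosets H)" using card_mono[OF fin] by metis
        with card show False by simp
      qed
      then show ?thesis using rcos_eq_iff[OF H] a b by blast
    qed
    ultimately show "H \<noteq> carrier G \<and> (\<forall>a\<in>carrier G - H. \<forall>b\<in>carrier G - H. a \<otimes> inv b \<in> H)"
      by blast
  next
    assume "H \<noteq> carrier G \<and> (\<forall>a\<in>carrier G - H. \<forall>b\<in>carrier G - H. a \<otimes> inv b \<in> H)"
    then obtain g where g: "g \<in> carrier G" "g \<notin> H"
      and outside: "\<forall>a\<in>carrier G - H. \<forall>b\<in>carrier G - H. a \<otimes> inv b \<in> H"
      using H_sub by blast
    have "rcosets H = {H, H #> g}"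
    proof
      show "rcosets H \<subseteq> {H, H #> g}"
      proof
        fix C assume "C \<in> rcosets H"
        then obtain k where k: "k \<in> carrier G" "C = H #> k" by (auto simp: RCOSETS_def)
        show "C \<in> {H, H #> g}"
        proof (cases "k \<in> H")
          case True
          then show ?thesis using k rcos_eq_H by simp
        next
          case False
          then show ?thesis using k g outside rcos_eq_iff[OF H k(1) g(1)] by simp
        qed
      qed
      show "{H, H #> g} \<subseteq> rcosets H" using H_rcos rcosetsI[OF H_sub g(1)] by simp
    qed
    moreover have "H #> g \<noteq> H" using rcos_eq_H g by simp
    ultimately show "card (rcosets H) = 2" by simp
  qed
qed

lemma (in group) index_two_mult_mem_iff:
  assumes H: "subgroup H G" "card (rcosets H) = 2"
    and g: "g \<in> carrier G" and y: "y \<in> carrier G" "y \<notin> H"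
  shows "g \<otimes> y \<in> H \<longleftrightarrow> g \<notin> H"
proof
  assume gy: "g \<otimes> y \<in> H"
  show "g \<notin> H"
  proof
    assume "g \<in> H"
    then have "inv g \<otimes> (g \<otimes> y) \<in> H" using gy H by (simp add: subgroup.m_closed subgroup.m_inv_closed)
    with g y show False by (simp add: m_assoc[symmetric])
  qed
next
  assume "g \<notin> H"
  moreover have "inv y \<notin> H" using H y by (metis inv_inv subgroup.m_inv_closed)
  ultimately have "g \<otimes> inv (inv y) \<in> H"
    using H g inv_closed[OF y(1)] card_rcosets_eq_2_iff[OF H(1)] by blast
  then show "g \<otimes> y \<in> H" using y by simp
qed

lemma (in group) index_two_subgroup_of_parity:
  assumes parity: "\<And>g k. g \<in> carrier G \<Longrightarrow> k \<in> carrier G \<Longrightarrow> p (g \<otimes> k) \<longleftrightarrow> (p g \<longleftrightarrow> p k)"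
    and g0: "g0 \<in> carrier G" "\<not> p g0"
  shows "subgroup {g \<in> carrier G. p g} G \<and> card (rcosets {g \<in> carrier G. p g}) = 2"
proof -
  have p_one: "p \<one>" using parity[OF one_closed one_closed] by simp
  have p_inv: "p (inv g) \<longleftrightarrow> p g" if "g \<in> carrier G" for g
    using parity[OF that inv_closed[OF that]] p_one that by auto
  have sub: "subgroup {g \<in> carrier G. p g} G"
    by (rule subgroupI) (auto simp: p_one p_inv parity)
  moreover have "card (rcosets {g \<in> carrier G. p g}) = 2"
    using g0 by (subst card_rcosets_eq_2_iff[OF sub]) (auto simp: parity p_inv)
  ultimately show ?thesis ..
qed

lemma sum_pos_iff:
  fixes f :: "'i \<Rightarrow> 'r::ordered_comm_monoid_add"
  assumes "finite A" "\<And>i. i \<in> A \<Longrightarrow> 0 \<le> f i"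
  shows "0 < sum f A \<longleftrightarrow> (\<exists>i\<in>A. 0 < f i)"
  using assms by (auto simp: order_less_le sum_nonneg sum_nonneg_eq_0_iff)

lemma finite_dirs: "finite (dirs n)"
  by (rule finite_subset[of _ "{- int n..int n}"]) (auto simp: dirs_def)

lemma dirs_avoiding_two:
  assumes "2 \<le> n"
  shows "\<exists>t\<in>dirs n. t \<noteq> u \<and> t \<noteq> v"
proof -
  have "{1, -1, 2} \<subseteq> dirs n" using assms by (auto simp: dirs_def)
  moreover have "\<exists>t\<in>{1, -1, 2}. t \<noteq> u \<and> t \<noteq> v" by simp arith
  ultimately show ?thesis by blast
qed

locale nbrw = group G for G :: "('a, 'b) monoid_scheme" (structure) +
  fixes n :: nat and x :: "nat \<Rightarrow> 'a" and alpha :: "int \<Rightarrow> int \<Rightarrow> real"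
  assumes gens_closed: "\<forall>i\<in>{1..n}. x i \<in> carrier G"
    and alpha_pos: "\<forall>s\<in>dirs n. \<forall>t\<in>dirs n. t \<noteq> - s \<longrightarrow> 0 < alpha s t"
begin

lemma gen_pow_cases:
  assumes "t \<in> dirs n"
  obtains i where "i \<in> {1..n}" "gen_pow G x t = x i \<or> gen_pow G x t = inv (x i)"
proof (cases "0 < t")
  case True
  with assms show ?thesis by (intro that[of "nat t"]) (auto simp: dirs_def gen_pow_def)
next
  case False
  with assms show ?thesis by (intro that[of "nat (- t)"]) (auto simp: dirs_def gen_pow_def)
qed

lemma gen_pow_closed: "t \<in> dirs n \<Longrightarrow> gen_pow G x t \<in> carrier G"
  using gens_closed by (elim gen_pow_cases) auto

lemma gen_pow_notin_subgroup:
  assumes "subgroup H G" "\<forall>i\<in>{1..n}. x i \<notin> H" "t \<in> dirs n"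
  shows "gen_pow G x t \<notin> H"
  using assms(3)
proof (rule gen_pow_cases)
  fix i assume "i \<in> {1..n}" "gen_pow G x t = x i \<or> gen_pow G x t = inv (x i)"
  then show ?thesis using assms gens_closed by (metis inv_inv subgroup.m_inv_closed)
qed

definition step :: "'a \<times> int \<Rightarrow> 'a \<times> int \<Rightarrow> bool" where
  "step a b \<longleftrightarrow> a \<in> Omega G n \<and> b \<in> Omega G n \<and> snd b \<noteq> - snd a
     \<and> fst b = fst a \<otimes> gen_pow G x (snd b)"

inductive walk :: "nat \<Rightarrow> 'a \<times> int \<Rightarrow> 'a \<times> int \<Rightarrow> bool" where
  walk_0: "walk 0 a a"
| walk_Suc: "step a c \<Longrightarrow> walk m c b \<Longrightarrow> walk (Suc m) a b"

lemma P_nonneg: "0 \<le> nbrw_P G n x alpha a b"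
  using alpha_pos by (auto simp: nbrw_P_def Omega_def less_imp_le)

lemma P_pos_iff_step: "0 < nbrw_P G n x alpha a b \<longleftrightarrow> step a b"
  using alpha_pos by (auto simp: nbrw_P_def Omega_def step_def)

lemma Pm_nonneg: "0 \<le> nbrw_Pm G n x alpha m a b"
  by (induction m arbitrary: a) (auto intro!: sum_nonneg mult_nonneg_nonneg P_nonneg)

lemma step_target:
  assumes "step a c"
  shows "c = (fst a \<otimes> gen_pow G x (snd c), snd c)" "snd c \<in> dirs n" "fst a \<in> carrier G"
  using assms by (auto simp: step_def Omega_def)

lemma Pm_pos_iff_walk: "0 < nbrw_Pm G n x alpha m a b \<longleftrightarrow> walk m a b"
proof (induction m arbitrary: a)
  case 0
  then show ?case by (auto intro: walk_0 elim: walk.cases)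
next
  case (Suc m)
  let ?c = "\<lambda>t. (fst a \<otimes> gen_pow G x t, t)"
  have "0 < nbrw_Pm G n x alpha (Suc m) a b \<longleftrightarrow>
     (\<exists>t\<in>dirs n. 0 < nbrw_P G n x alpha a (?c t) * nbrw_Pm G n x alpha m (?c t) b)"
    using finite_dirs by (simp add: sum_pos_iff P_nonneg Pm_nonneg)
  also have "\<dots> \<longleftrightarrow> (\<exists>t\<in>dirs n. step a (?c t) \<and> walk m (?c t) b)"
    using P_nonneg[THEN leD] Pm_nonneg[THEN leD]
    by (simp add: zero_less_mult_iff P_pos_iff_step Suc.IH)
  also have "\<dots> \<longleftrightarrow> walk (Suc m) a b"
  proof
    assume "walk (Suc m) a b"
    then obtain c where "step a c" "walk m c b" by (auto elim: walk.cases)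
    then show "\<exists>t\<in>dirs n. step a (?c t) \<and> walk m (?c t) b"
      using step_target[of a c] by (intro bexI[of _ "snd c"]) auto
  qed (auto intro: walk_Suc)
  finally show ?case .
qed

lemma walk_append: "walk m a b \<Longrightarrow> walk k b c \<Longrightarrow> walk (m + k) a c"
  by (induction rule: walk.induct) (auto intro: walk_Suc)

lemma walk_snoc: "walk m a b \<Longrightarrow> step b c \<Longrightarrow> walk (Suc m) a c"
  using walk_append[of m a b 1 c] by (auto intro: walk_Suc walk_0)

lemma walk_translate:
  assumes g: "g \<in> carrier G"
  shows "walk m a b \<Longrightarrow> walk m (g \<otimes> fst a, snd a) (g \<otimes> fst b, snd b)"
proof (induction rule: walk.induct)
  case (walk_0 a)
  then show ?case by (rule walk.walk_0)
next
  case (walk_Suc a c m b)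
  have "step (g \<otimes> fst a, snd a) (g \<otimes> fst c, snd c)"
    using walk_Suc(1) g gen_pow_closed by (auto simp: step_def Omega_def m_assoc)
  then show ?case using walk_Suc(3) by (rule walk.walk_Suc)
qed

definition potential :: "int \<Rightarrow> ('a \<Rightarrow> int) \<Rightarrow> bool" where
  "potential d f \<longleftrightarrow> (\<forall>h\<in>carrier G. \<forall>t\<in>dirs n. d dvd f (h \<otimes> gen_pow G x t) - f h - 1)"

lemma potential_walk:
  assumes "potential d f"
  shows "walk m a b \<Longrightarrow> d dvd f (fst b) - f (fst a) - int m"
proof (induction rule: walk.induct)
  case (walk_0 a)
  then show ?case by simp
next
  case (walk_Suc a c m b)
  have "d dvd f (fst c) - f (fst a) - 1"
    using assms step_target[OF walk_Suc(1)] unfolding potential_def by (metis fst_conv)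
  from dvd_add[OF this walk_Suc(3)] show ?case by (simp add: algebra_simps)
qed

lemma potential_of_index_two_subgroup:
  assumes "subgroup H G" "card (rcosets H) = 2" "\<forall>i\<in>{1..n}. x i \<notin> H"
  shows "potential 2 (\<lambda>g. if g \<in> H then 0 else 1)"
  unfolding potential_def
proof (intro ballI)
  fix h t assume "h \<in> carrier G" "t \<in> dirs n"
  then have "h \<otimes> gen_pow G x t \<in> H \<longleftrightarrow> h \<notin> H"
    using assms gen_pow_closed gen_pow_notin_subgroup by (simp add: index_two_mult_mem_iff)
  then show "2 dvd (if h \<otimes> gen_pow G x t \<in> H then 0 else 1) - (if h \<in> H then 0 else 1) - (1::int)"
    by auto
qed

end

locale irreducible_nbrw = nbrw +
  assumes two_le_n: "2 \<le> n" and irreducible: "nbrw_irreducible G n x alpha"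
begin

lemma walk_exists: "a \<in> Omega G n \<Longrightarrow> b \<in> Omega G n \<Longrightarrow> \<exists>m. walk m a b"
  using irreducible by (auto simp: nbrw_irreducible_def Pm_pos_iff_walk)

lemma walk_lengths_cong:
  assumes returns: "\<forall>m. walk m a0 a0 \<longrightarrow> d dvd int m"
    and "a0 \<in> Omega G n" "b \<in> Omega G n" "walk m a0 b" "walk m' a0 b"
  shows "d dvd int m - int m'"
proof -
  obtain k where k: "walk k b a0" using walk_exists assms(2,3) by blast
  have "d dvd int (m + k)" "d dvd int (m' + k)"
    using returns walk_append[OF assms(4) k] walk_append[OF assms(5) k] by auto
  from dvd_diff[OF this] show ?thesis by simp
qed

lemma level_function_exists:
  assumes "\<forall>m. walk m a0 a0 \<longrightarrow> d dvd int m" "a0 \<in> Omega G n"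
  obtains c where "\<And>a b. step a b \<Longrightarrow> d dvd c b - c a - 1"
proof
  define c where "c b = int (SOME m. walk m a0 b)" for b
  have walk_c: "walk (nat (c b)) a0 b" if "b \<in> Omega G n" for b
    using someI_ex[OF walk_exists[OF assms(2) that]] by (simp add: c_def)
  fix a b assume ab: "step a b"
  then have "a \<in> Omega G n" "b \<in> Omega G n" by (auto simp: step_def)
  then have "d dvd int (Suc (nat (c a))) - int (nat (c b))"
    using walk_lengths_cong[OF assms] walk_snoc[OF walk_c ab] walk_c by blast
  then show "d dvd c b - c a - 1"
    by (simp add: c_def algebra_simps dvd_diff_commute)
qed

lemma level_function_dir_independent:
  fixes c :: "'a \<times> int \<Rightarrow> int"
  assumes level: "\<And>a b. step a b \<Longrightarrow> d dvd c b - c a - 1"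
    and h: "h \<in> carrier G" and "s \<in> dirs n" "s' \<in> dirs n"
  shows "d dvd c (h, s) - c (h, s')"
proof -
  obtain t where t: "t \<in> dirs n" "t \<noteq> - s" "t \<noteq> - s'"
    using dirs_avoiding_two[OF two_le_n] by blast
  let ?b = "(h \<otimes> gen_pow G x t, t)"
  have "step (h, s) ?b" "step (h, s') ?b"
    using assms t gen_pow_closed by (auto simp: step_def Omega_def)
  from dvd_diff[OF level[OF this(2)] level[OF this(1)]] show ?thesis by simp
qed

lemma potential_of_return_times:
  assumes "\<forall>m. walk m a0 a0 \<longrightarrow> d dvd int m" "a0 \<in> Omega G n"
  obtains f where "potential d f"
proof -
  obtain c where level: "\<And>a b. step a b \<Longrightarrow> d dvd c b - c a - 1"
    using level_function_exists[OF assms] by blast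
  have one: "1 \<in> dirs n" using two_le_n by (auto simp: dirs_def)
  have "potential d (\<lambda>h. c (h, 1))"
    unfolding potential_def
  proof (intro ballI)
    fix h t assume h: "h \<in> carrier G" and t: "t \<in> dirs n"
    let ?h = "h \<otimes> gen_pow G x t"
    have h': "?h \<in> carrier G" using h t gen_pow_closed by simp
    have "t \<noteq> - t" using t by (auto simp: dirs_def)
    then have "step (h, t) (?h, t)" using h t h' by (auto simp: step_def Omega_def)
    from level[OF this] level_function_dir_independent[OF level h' one t]
      level_function_dir_independent[OF level h t one]
    have "d dvd (c (?h, 1) - c (?h, t)) + (c (?h, t) - c (h, t) - 1) + (c (h, t) - c (h, 1))"
      by (intro dvd_add)
    then show "d dvd c (?h, 1) - c (h, 1) - 1" by (simp add: algebra_simps)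
  qed
  then show ?thesis by (rule that)
qed

lemma dvd_state_period_iff:
  assumes "a \<in> Omega G n"
  shows "d dvd state_period G n x alpha a \<longleftrightarrow> (\<exists>f. potential (int d) f)"
proof -
  have "d dvd state_period G n x alpha a \<longleftrightarrow> (\<forall>m. walk m a a \<longrightarrow> int d dvd int m)"
    unfolding state_period_def dvd_Gcd_iff
    by (auto simp: Pm_pos_iff_walk Suc_le_eq) (metis dvd_0_right gr0I)
  also have "\<dots> \<longleftrightarrow> (\<exists>f. potential (int d) f)"
  proof
    assume "\<forall>m. walk m a a \<longrightarrow> int d dvd int m"
    then show "\<exists>f. potential (int d) f" using potential_of_return_times[OF _ assms] by blast
  next
    assume "\<exists>f. potential (int d) f"
    then show "\<forall>m. walk m a a \<longrightarrow> int d dvd int m" using potential_walk by fastforce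
  qed
  finally show ?thesis .
qed

lemma potential_dvd_two: "potential d f \<Longrightarrow> d dvd 2"
proof -
  assume pot: "potential d f"
  have x1: "x 1 \<in> carrier G" using gens_closed two_le_n by auto
  have "1 \<in> dirs n" "-1 \<in> dirs n" using two_le_n by (auto simp: dirs_def)
  then have "d dvd f (\<one> \<otimes> gen_pow G x 1) - f \<one> - 1"
    "d dvd f (x 1 \<otimes> gen_pow G x (-1)) - f (x 1) - 1"
    using pot x1 unfolding potential_def by blast+
  moreover have "gen_pow G x 1 = x 1" "gen_pow G x (-1) = inv (x 1)" by (simp_all add: gen_pow_def)
  ultimately have "d dvd f (x 1) - f \<one> - 1" "d dvd f \<one> - f (x 1) - 1"
    using x1 by simp_all
  from dvd_add[OF this] show "d dvd 2" using x1 by simp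
qed

lemma state_period_eq_2_iff:
  assumes "a \<in> Omega G n"
  shows "state_period G n x alpha a = 2 \<longleftrightarrow> (\<exists>f. potential 2 f)"
proof -
  let ?p = "state_period G n x alpha a"
  have "int ?p dvd 2"
    using dvd_state_period_iff[OF assms, of ?p] potential_dvd_two by (meson dvd_refl)
  then have "?p = 2 \<longleftrightarrow> 2 dvd ?p" by (auto intro: dvd_antisym)
  then show ?thesis using dvd_state_period_iff[OF assms, of 2] by simp
qed

lemma has_period_2_iff: "nbrw_has_period G n x alpha 2 \<longleftrightarrow> (\<exists>f. potential 2 f)"
proof -
  have "(\<one>, 1) \<in> Omega G n" using two_le_n by (auto simp: Omega_def dirs_def)
  then show ?thesis unfolding nbrw_has_period_def using state_period_eq_2_iff by blast
qed

lemma potential_mult: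
  assumes pot: "potential d f" and g: "g \<in> carrier G" and k: "k \<in> carrier G"
  shows "d dvd f (g \<otimes> k) - f g - f k + f \<one>"
proof -
  have "(\<one>, 1) \<in> Omega G n" "(k, 1) \<in> Omega G n"
    using two_le_n k by (auto simp: Omega_def dirs_def)
  then obtain m where w: "walk m (\<one>, 1) (k, 1)" using walk_exists by blast
  have "walk m (g, 1) (g \<otimes> k, 1)" using walk_translate[OF g w] g by simp
  from dvd_diff[OF potential_walk[OF pot this] potential_walk[OF pot w]]
  show ?thesis by (simp add: algebra_simps)
qed

lemma index_two_subgroup_of_potential:
  assumes pot: "potential 2 f"
  shows "\<exists>H. subgroup H G \<and> card (rcosets H) = 2 \<and> (\<forall>i\<in>{1..n}. x i \<notin> H)"
proof -
  let ?p = "\<lambda>g. even (f g - f \<one>)"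
  have gens_odd: "\<not> ?p (x i)" if "i \<in> {1..n}" for i
  proof -
    have "2 dvd f (\<one> \<otimes> gen_pow G x (int i)) - f \<one> - 1"
      using pot that by (auto simp: potential_def dirs_def)
    then show ?thesis using that gens_closed by (simp add: gen_pow_def)
  qed
  have "?p (g \<otimes> k) \<longleftrightarrow> (?p g \<longleftrightarrow> ?p k)" if "g \<in> carrier G" "k \<in> carrier G" for g k
    using potential_mult[OF pot that] by presburger
  moreover have "1 \<in> {1..n}" using two_le_n by simp
  ultimately have "subgroup {g \<in> carrier G. ?p g} G \<and> card (rcosets {g \<in> carrier G. ?p g}) = 2"
    using index_two_subgroup_of_parity[of ?p "x 1"] gens_odd gens_closed by blast
  then show ?thesis using gens_odd by blast
qed

end

theorem mainTheorem3:
  fixes G :: "('a, 'b) monoid_scheme" and n :: nat and x :: "nat \<Rightarrow> 'a"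
    and alpha :: "int \<Rightarrow> int \<Rightarrow> real" and beta :: "int \<Rightarrow> real"
  assumes "group G"
    and "2 \<le> n"
    and "\<forall>i\<in>{1..n}. x i \<in> carrier G"
    and "nbrw_params n alpha beta"
    and "nbrw_irreducible G n x alpha"
  shows "nbrw_has_period G n x alpha 2 \<longleftrightarrow>
    (\<exists>H. subgroup H G \<and> card (rcosets\<^bsub>G\<^esub> H) = 2 \<and> (\<forall>i\<in>{1..n}. x i \<notin> H))"
proof -
  interpret irreducible_nbrw G n x alpha
    using assms by (simp add: irreducible_nbrw_def irreducible_nbrw_axioms_def nbrw_def
        nbrw_axioms_def nbrw_params_def)
  show ?thesis
    unfolding has_period_2_iff
    using index_two_subgroup_of_potential potential_of_index_two_subgroup by blast
qed

end
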